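(* Let $H$ be a real, separable, infinite-dimensional Hilbert space and $|\cdot|$ a measurable norm on $H$. Let $K$ be a closed convex subset of $H$ and $p\in H$ a point outside $K$. Then there is a measurably adapted sequence of finite-dimensional subspaces $F_1\subset F_2\subset\cdots\subset H$ with $p\in F_1$ such that $(p+F_n^\perp)\cap K=\emptyset$ for each $n\geq1$. Moreover, $p\notin\mathrm{pr}_{F_n}(K)$ for all $n\ge1$, where $\mathrm{pr}_{F_n}$ is the orthogonal projection of $H$ onto $F_n$.
   Context: A norm $|\cdot|$ on $H$ is a measurable norm if for every $\epsilon>0$ there is a finite-dimensional subspace $F_0\subset H$ such that $\mathrm{Gauss}[v\in F_1: |v|>\epsilon]<\epsilon$ for every finite-dimensional subspace $F_1\subset H$ orthogonal to $F_0$ ($\mathrm{Gauss}$ = standard Gaussian measure on $F_1$). A sequence $(F_n)_{n\geq1}$ of closed subspaces of $H$ is measurably adapted if: (i) $F_1\subset F_2\subset\cdots$; (ii) $1\leq\dim(F_{n+1}\cap F_n^\perp)<\infty$ for all $n$; (iii) $\bigcup_n F_n$ is dense in $H$; (iv) $\mathrm{Gauss}[v\in F_{n+1}\cap F_n^\perp: |v|>2^{-n}]<2^{-n}$ for every $n\ge1$. *)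

theory Defs
  imports "HOL-Analysis.Analysis" "HOL-Probability.Probability"
begin

text \<open>A (not necessarily continuous) norm on a real vector space.\<close>
definition is_norm :: "('a::real_vector \<Rightarrow> real) \<Rightarrow> bool" where
  "is_norm N \<longleftrightarrow> (\<forall>x. 0 \<le> N x) \<and> (\<forall>x. N x = 0 \<longleftrightarrow> x = 0)
     \<and> (\<forall>c x. N (c *\<^sub>R x) = \<bar>c\<bar> * N x) \<and> (\<forall>x y. N (x + y) \<le> N x + N y)"

definition fin_dim_subspace :: "'a::real_vector set \<Rightarrow> bool" where
  "fin_dim_subspace G \<longleftrightarrow> (\<exists>B. finite B \<and> span B = G)"

definition is_onb :: "'a::real_inner set \<Rightarrow> nat \<Rightarrow> (nat \<Rightarrow> 'a) \<Rightarrow> bool" where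
  "is_onb G d b \<longleftrightarrow> (\<forall>i<d. \<forall>j<d. b i \<bullet> b j = (if i = j then 1 else 0))
      \<and> span (b ` {..<d}) = G"

text \<open>Standard Gaussian measure on a finite-dimensional subspace G, evaluated on the set
  of points satisfying P: the law of \<open>\<Sum>i<d. g i *\<^sub>R b i\<close> with \<open>g i\<close> i.i.d. N(0,1)
  and \<open>b\<close> an orthonormal basis of G (the result does not depend on the chosen basis).\<close>
definition gauss :: "'a::real_inner set \<Rightarrow> ('a \<Rightarrow> bool) \<Rightarrow> real" where
  "gauss G P = (let (d, b) = (SOME (d, b). is_onb G d b) in
     measure (PiM {..<d} (\<lambda>_. density lborel (normal_density 0 1)))
       {g \<in> space (PiM {..<d} (\<lambda>_. density lborel (normal_density 0 1))).
          P (\<Sum>i<d. g i *\<^sub>R b i)})"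

definition measurable_norm :: "('a::real_inner \<Rightarrow> real) \<Rightarrow> bool" where
  "measurable_norm N \<longleftrightarrow> is_norm N \<and>
     (\<forall>\<epsilon>>0. \<exists>F0. fin_dim_subspace F0 \<and>
        (\<forall>F1. fin_dim_subspace F1 \<and> F1 \<subseteq> orthogonal_comp F0 \<longrightarrow>
           gauss F1 (\<lambda>v. N v > \<epsilon>) < \<epsilon>))"

text \<open>Measurably adapted sequence, indexed from 1 (the value at 0 is irrelevant).\<close>
definition measurably_adapted :: "('a::real_inner \<Rightarrow> real) \<Rightarrow> (nat \<Rightarrow> 'a set) \<Rightarrow> bool" where
  "measurably_adapted N F \<longleftrightarrow>
     (\<forall>n\<ge>1. subspace (F n) \<and> closed (F n)) \<and>
     (\<forall>n\<ge>1. F n \<subseteq> F (Suc n)) \<and>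
     (\<forall>n\<ge>1. F (Suc n) \<inter> orthogonal_comp (F n) \<noteq> {0} \<and>
             fin_dim_subspace (F (Suc n) \<inter> orthogonal_comp (F n))) \<and>
     closure (\<Union>n\<in>{1..}. F n) = UNIV \<and>
     (\<forall>n\<ge>1. gauss (F (Suc n) \<inter> orthogonal_comp (F n)) (\<lambda>v. N v > (1/2)^n) < (1/2)^n)"

text \<open>Orthogonal projection onto a (finite-dimensional, hence closed) subspace F.\<close>
definition orth_proj :: "'a::real_inner set \<Rightarrow> 'a \<Rightarrow> 'a" where
  "orth_proj F x = (THE y. y \<in> F \<and> x - y \<in> orthogonal_comp F)"

end

theory Submission
  imports Defs
begin

text \<open>Let q be the point of K nearest to p, which exists because H is complete, and put
  u = q - p; then \<open>(k - p) \<bullet> u > 0\<close> for every k in K. Hence no subspace F containing u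
  admits a point k of K with k - p orthogonal to F, and both conclusions say exactly this
  (pr_F k = p means k - p \<bottom> F). It remains to build a measurably adapted sequence containing
  p and u: take spans of an increasing chain of finite sets, adding at step n a point of a
  dense sequence, a vector outside the current span (H is infinite-dimensional) and a spanning
  set of the subspace F0 that the measurability of the norm provides for \<open>\<epsilon> = 2^-(n+1)\<close>.\<close>

lemma fin_dim_subspace_imp_subspace: "fin_dim_subspace F \<Longrightarrow> subspace F"
  unfolding fin_dim_subspace_def by auto

lemma orth_proj_unique:
  assumes "subspace F" and "y \<in> F" and "x - y \<in> orthogonal_comp F"
  shows "orth_proj F x = y"
  unfolding orth_proj_def
proof (rule the_equality)
  fix z assume z: "z \<in> F \<and> x - z \<in> orthogonal_comp F"
  have "z - y \<in> F"
    using assms(1,2) z by (blast intro: subspace_diff)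
  moreover have "z - y = (x - y) - (x - z)"
    by simp
  then have "z - y \<in> orthogonal_comp F"
    using subspace_orthogonal_comp assms(3) z by (metis subspace_diff)
  ultimately have "z - y \<in> F \<inter> orthogonal_comp F"
    by blast
  then show "z = y"
    using orthogonal_Int_0[OF assms(1)] by simp
qed (use assms in blast)

lemma orthogonal_decomposition_fin_dim:
  fixes F :: "'a::real_inner set"
  assumes "fin_dim_subspace F"
  shows "\<exists>y\<in>F. x - y \<in> orthogonal_comp F"
proof -
  obtain B where "finite B" "span B = F"
    using assms unfolding fin_dim_subspace_def by blast
  then obtain C where C: "finite C" "span C = F" "pairwise orthogonal C"
    using basis_orthogonal by metis
  define y where "y = (\<Sum>c\<in>C. (c \<bullet> x / (c \<bullet> c)) *\<^sub>R c)"
  have "y \<in> F"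
    unfolding y_def C(2)[symmetric] by (intro span_sum span_mul span_base)
  moreover have "orthogonal (x - y) b" if "b \<in> C" for b
  proof -
    have "b \<bullet> ((c \<bullet> x / (c \<bullet> c)) *\<^sub>R c) = (if c = b then b \<bullet> x else 0)"
      if "c \<in> C" for c
    proof (cases "c = b")
      case True
      then show ?thesis
        by (cases "b = 0") simp_all
    next
      case False
      then have "b \<bullet> c = 0"
        using pairwiseD[OF C(3) \<open>b \<in> C\<close> that] False by (simp add: orthogonal_def)
      then show ?thesis
        using False by simp
    qed
    then have "b \<bullet> y = b \<bullet> x"
      unfolding y_def inner_sum_right using C(1) \<open>b \<in> C\<close> by simp
    then show ?thesis
      by (simp add: orthogonal_def inner_diff_right inner_commute)
  qed
  then have "x - y \<in> orthogonal_comp (span C)"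
    unfolding orthogonal_comp_def using orthogonal_to_span orthogonal_commute by blast
  ultimately show ?thesis
    using C(2) by blast
qed

lemma orth_proj_fin_dim:
  assumes "fin_dim_subspace F"
  shows "orth_proj F x \<in> F" and "x - orth_proj F x \<in> orthogonal_comp F"
proof -
  obtain y where y: "y \<in> F" "x - y \<in> orthogonal_comp F"
    using orthogonal_decomposition_fin_dim[OF assms] by blast
  moreover have "orth_proj F x = y"
    using orth_proj_unique[OF fin_dim_subspace_imp_subspace[OF assms] y] .
  ultimately show "orth_proj F x \<in> F" "x - orth_proj F x \<in> orthogonal_comp F"
    by simp_all
qed

lemma orth_proj_eq_0:
  assumes "fin_dim_subspace F" and "x \<in> orthogonal_comp F"
  shows "orth_proj F x = 0"
  using assms fin_dim_subspace_imp_subspace subspace_0 by (intro orth_proj_unique) auto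

lemma linear_orth_proj:
  assumes "fin_dim_subspace F"
  shows "linear (orth_proj F)"
proof (rule linearI)
  have F: "subspace F"
    using fin_dim_subspace_imp_subspace[OF assms] .
  note P = orth_proj_fin_dim[OF assms]
  fix x y :: 'a and c :: real
  have "(x + y) - (orth_proj F x + orth_proj F y) = (x - orth_proj F x) + (y - orth_proj F y)"
    by simp
  then have "(x + y) - (orth_proj F x + orth_proj F y) \<in> orthogonal_comp F"
    using P(2) subspace_orthogonal_comp by (metis subspace_add)
  then show "orth_proj F (x + y) = orth_proj F x + orth_proj F y"
    using F P(1) by (intro orth_proj_unique subspace_add)
  have "c *\<^sub>R x - c *\<^sub>R orth_proj F x = c *\<^sub>R (x - orth_proj F x)"
    by (simp add: scaleR_diff_right)
  then have "c *\<^sub>R x - c *\<^sub>R orth_proj F x \<in> orthogonal_comp F"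
    using P(2) subspace_orthogonal_comp by (metis subspace_scale)
  then show "orth_proj F (c *\<^sub>R x) = c *\<^sub>R orth_proj F x"
    using F P(1) by (intro orth_proj_unique subspace_scale)
qed

lemma closed_orthogonal_comp: "closed (orthogonal_comp W)"
proof -
  have "orthogonal_comp W = (\<Inter>y\<in>W. {x. y \<bullet> x = 0})"
    unfolding orthogonal_comp_def orthogonal_def by auto
  then show ?thesis
    by (auto intro: closed_hyperplane)
qed

lemma orthogonal_comp_orthogonal_comp_fin_dim:
  assumes "fin_dim_subspace F"
  shows "orthogonal_comp (orthogonal_comp F) = F"
proof
  show "orthogonal_comp (orthogonal_comp F) \<subseteq> F"
  proof
    fix x assume x: "x \<in> orthogonal_comp (orthogonal_comp F)"
    have "orth_proj F x \<in> orthogonal_comp (orthogonal_comp F)"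
      using orth_proj_fin_dim(1)[OF assms] orthogonal_comp_subset by blast
    then have "x - orth_proj F x \<in> orthogonal_comp F \<inter> orthogonal_comp (orthogonal_comp F)"
      using x orth_proj_fin_dim(2)[OF assms] subspace_orthogonal_comp by (blast intro: subspace_diff)
    then have "x - orth_proj F x = 0"
      using orthogonal_Int_0[OF subspace_orthogonal_comp, of F] by blast
    then show "x \<in> F"
      using orth_proj_fin_dim(1)[OF assms, of x] by simp
  qed
qed (rule orthogonal_comp_subset)

lemma closed_fin_dim_subspace:
  fixes F :: "'a::real_inner set"
  assumes "fin_dim_subspace F"
  shows "closed F"
  using closed_orthogonal_comp[of "orthogonal_comp F"]
  unfolding orthogonal_comp_orthogonal_comp_fin_dim[OF assms] .

lemma span_Int_orthogonal_comp:
  fixes B :: "'a::real_inner set"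
  assumes F: "fin_dim_subspace F" and "F \<subseteq> span B"
  shows "span B \<inter> orthogonal_comp F = span ((\<lambda>x. x - orth_proj F x) ` B)"
proof -
  have "linear (\<lambda>x. x - orth_proj F x)"
    using linear_orth_proj[OF F] by (intro linear_compose_sub linear_ident)
  then have "span ((\<lambda>x. x - orth_proj F x) ` B) = (\<lambda>x. x - orth_proj F x) ` span B"
    by (rule span_linear_image)
  also have "\<dots> = span B \<inter> orthogonal_comp F"
  proof (intro equalityI subsetI)
    fix z assume "z \<in> (\<lambda>x. x - orth_proj F x) ` span B"
    then obtain x where x: "x \<in> span B" and z: "z = x - orth_proj F x"
      by blast
    have "orth_proj F x \<in> span B"
      using orth_proj_fin_dim(1)[OF F] assms(2) by blast
    then show "z \<in> span B \<inter> orthogonal_comp F"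
      using x z orth_proj_fin_dim(2)[OF F] by (simp add: span_diff)
  next
    fix z assume z: "z \<in> span B \<inter> orthogonal_comp F"
    then have "z = z - orth_proj F z"
      using orth_proj_eq_0[OF F] by simp
    with z show "z \<in> (\<lambda>x. x - orth_proj F x) ` span B"
      by blast
  qed
  finally show ?thesis
    by (rule sym)
qed

lemma fin_dim_subspace_Int_orthogonal_comp:
  fixes F G :: "'a::real_inner set"
  assumes "fin_dim_subspace F" and "fin_dim_subspace G" and "F \<subseteq> G"
  shows "fin_dim_subspace (G \<inter> orthogonal_comp F)"
proof -
  obtain B where "finite B" "span B = G"
    using assms(2) unfolding fin_dim_subspace_def by blast
  with span_Int_orthogonal_comp[OF assms(1), of B] assms(3) show ?thesis
    unfolding fin_dim_subspace_def by blast
qed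

lemma Int_orthogonal_comp_neq_0:
  fixes F G :: "'a::real_inner set"
  assumes F: "fin_dim_subspace F" and "subspace G" and "F \<subseteq> G" and "v \<in> G" and "v \<notin> F"
  shows "G \<inter> orthogonal_comp F \<noteq> {0}"
proof -
  have "v - orth_proj F v \<in> G \<inter> orthogonal_comp F"
    using assms orth_proj_fin_dim[OF F, of v] by (blast intro: subspace_diff)
  moreover have "v - orth_proj F v \<noteq> 0"
    using assms(5) orth_proj_fin_dim(1)[OF F, of v] by auto
  ultimately show ?thesis
    by blast
qed

lemma parallelogram_law:
  fixes a b :: "'a::real_inner"
  shows "norm (a - b)^2 + norm (a + b)^2 = 2 * norm a ^2 + 2 * norm b ^2"
  by (simp add: power2_norm_eq_inner inner_add_left inner_add_right inner_diff_left
      inner_diff_right inner_commute)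

lemma convex_dist_le_excess:
  fixes K :: "'a::real_inner set"
  assumes "convex K" and "a \<in> K" and "b \<in> K" and d: "\<And>k. k \<in> K \<Longrightarrow> d \<le> norm (p - k)^2"
  shows "dist a b ^2 \<le> 2 * norm (p - a)^2 + 2 * norm (p - b)^2 - 4 * d"
proof -
  define m where "m = (1/2) *\<^sub>R a + (1/2) *\<^sub>R b"
  have "m \<in> K"
    using assms(1-3) unfolding m_def convex_def by auto
  have "(p - a) + (p - b) = 2 *\<^sub>R (p - m)"
    unfolding m_def by (simp add: algebra_simps scaleR_2)
  then have "norm ((p - a) + (p - b))^2 = 4 * norm (p - m)^2"
    by (simp add: power_mult_distrib)
  moreover have "dist a b = norm ((p - b) - (p - a))"
    by (simp add: dist_norm norm_minus_commute)
  ultimately have "dist a b ^2 = 2 * norm (p - a)^2 + 2 * norm (p - b)^2 - 4 * norm (p - m)^2"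
    using parallelogram_law[of "p - b" "p - a"] by (simp add: add.commute)
  then show ?thesis
    using d[OF \<open>m \<in> K\<close>] by simp
qed

lemma nearest_point_exists:
  fixes K :: "'a::{real_inner,complete_space} set"
  assumes "closed K" and "convex K" and "K \<noteq> {}"
  shows "\<exists>q\<in>K. \<forall>k\<in>K. norm (p - q)^2 \<le> norm (p - k)^2"
proof -
  define f where "f k = norm (p - k)^2" for k
  define d where "d = Inf (f ` K)"
  have d_le: "d \<le> f k" if "k \<in> K" for k
    unfolding d_def using that by (intro cInf_lower bdd_belowI[of _ 0]) (auto simp: f_def)
  have "\<exists>k\<in>K. f k < d + inverse (real (Suc n))" for n
    using cInf_lessD[of "f ` K" "d + inverse (real (Suc n))"] assms(3) unfolding d_def by auto
  then obtain kk where kk: "\<And>n. kk n \<in> K" "\<And>n. f (kk n) < d + inverse (real (Suc n))"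
    by metis
  have "Cauchy kk"
  proof (rule metric_CauchyI)
    fix e :: real assume "e > 0"
    then obtain M where M: "inverse (real (Suc M)) < e^2 / 4"
      using reals_Archimedean[of "e^2 / 4"] by auto
    have "dist (kk m) (kk n) < e" if "m \<ge> M" "n \<ge> M" for m n
    proof -
      have "inverse (real (Suc m)) \<le> inverse (real (Suc M))"
           "inverse (real (Suc n)) \<le> inverse (real (Suc M))"
        using that by (auto simp: field_simps)
      moreover have "dist (kk m) (kk n)^2 \<le> 2 * f (kk m) + 2 * f (kk n) - 4 * d"
        unfolding f_def using d_le by (intro convex_dist_le_excess[OF assms(2) kk(1) kk(1)]) (simp add: f_def)
      ultimately have "dist (kk m) (kk n)^2 < e^2"
        using kk(2)[of m] kk(2)[of n] M by linarith
      then show ?thesis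
        using \<open>e > 0\<close> by (simp add: power_less_imp_less_base)
    qed
    then show "\<exists>M. \<forall>m\<ge>M. \<forall>n\<ge>M. dist (kk m) (kk n) < e"
      by blast
  qed
  then obtain q where q: "kk \<longlonglongrightarrow> q"
    using Cauchy_convergent_iff convergent_def by blast
  have "q \<in> K"
    using assms(1) closed_sequentially kk(1) q by blast
  moreover have "f q \<le> f k" if "k \<in> K" for k
  proof (rule LIMSEQ_le)
    show "(\<lambda>n. f (kk n)) \<longlonglongrightarrow> f q"
      unfolding f_def by (intro tendsto_intros q)
    show "(\<lambda>n. f k + inverse (real (Suc n))) \<longlonglongrightarrow> f k"
      using tendsto_add[OF tendsto_const LIMSEQ_inverse_real_of_nat, of "f k"] by simp
    show "\<exists>N. \<forall>n\<ge>N. f (kk n) \<le> f k + inverse (real (Suc n))"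
      using kk(2) d_le[OF that] by (meson add_mono_thms_linordered_semiring(3) less_imp_le order_trans)
  qed
  ultimately show ?thesis
    unfolding f_def by blast
qed

lemma nearest_point_inner_le_0:
  fixes K :: "'a::real_inner set"
  assumes "convex K" and "q \<in> K" and "k \<in> K"
    and nearest: "\<And>k. k \<in> K \<Longrightarrow> norm (p - q)^2 \<le> norm (p - k)^2"
  shows "(p - q) \<bullet> (k - q) \<le> 0"
proof (rule ccontr)
  define c where "c = (p - q) \<bullet> (k - q)"
  define s where "s = norm (k - q)^2"
  assume "\<not> (p - q) \<bullet> (k - q) \<le> 0"
  then have "c > 0"
    unfolding c_def by simp
  then have "k \<noteq> q"
    unfolding c_def by auto
  then have "s > 0"
    unfolding s_def by simp
  define t where "t = c / (s + c)"
  have "0 < t" "t < 1"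
    using \<open>c > 0\<close> \<open>s > 0\<close> unfolding t_def by (auto simp: field_simps)
  have "q + t *\<^sub>R (k - q) = (1 - t) *\<^sub>R q + t *\<^sub>R k"
    by (simp add: algebra_simps)
  also have "\<dots> \<in> K"
    using assms(1-3) \<open>0 < t\<close> \<open>t < 1\<close> unfolding convex_def by auto
  finally have "norm (p - q)^2 \<le> norm ((p - q) - t *\<^sub>R (k - q))^2"
    using nearest by (simp add: diff_diff_eq)
  also have "\<dots> = norm (p - q)^2 - 2 * t * c + t^2 * s"
    unfolding c_def s_def power2_norm_eq_inner
    by (simp add: inner_diff_left inner_diff_right inner_commute power2_eq_square algebra_simps)
  finally have "2 * c \<le> t * s"
    using \<open>0 < t\<close> by (simp add: power2_eq_square)
  moreover have "t * s < c"
    using \<open>c > 0\<close> \<open>s > 0\<close> unfolding t_def by (simp add: field_simps)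
  ultimately show False
    using \<open>c > 0\<close> by linarith
qed

lemma separating_direction_closed_convex:
  fixes K :: "'a::{real_inner,complete_space} set"
  assumes "closed K" and "convex K" and "p \<notin> K"
  shows "\<exists>u. \<forall>k\<in>K. 0 < (k - p) \<bullet> u"
proof (cases "K = {}")
  case False
  then obtain q where "q \<in> K" and nearest: "\<And>k. k \<in> K \<Longrightarrow> norm (p - q)^2 \<le> norm (p - k)^2"
    using nearest_point_exists[OF assms(1,2)] by blast
  have "0 < (k - p) \<bullet> (q - p)" if "k \<in> K" for k
  proof -
    have "(k - p) \<bullet> (q - p) = (q - p) \<bullet> (q - p) - (p - q) \<bullet> (k - q)"
      by (simp add: inner_diff_left inner_diff_right inner_commute algebra_simps)
    moreover have "0 < (q - p) \<bullet> (q - p)"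
      using assms(3) \<open>q \<in> K\<close> by auto
    ultimately show ?thesis
      using nearest_point_inner_le_0[OF assms(2) \<open>q \<in> K\<close> that nearest] by linarith
  qed
  then show ?thesis
    by blast
qed simp

lemma measurably_adapted_span_chain:
  fixes N :: "'a::real_inner \<Rightarrow> real" and S :: "nat \<Rightarrow> 'a set"
  assumes fin: "\<And>n. finite (S n)" and mono: "\<And>n. S n \<subseteq> S (Suc n)"
    and grow: "\<And>n. \<not> S (Suc n) \<subseteq> span (S n)"
    and dense: "closure (\<Union>n\<in>{1..}. span (S n)) = UNIV"
    and small: "\<And>n F1. n \<ge> 1 \<Longrightarrow> fin_dim_subspace F1 \<Longrightarrow>
      F1 \<subseteq> orthogonal_comp (span (S n)) \<Longrightarrow> gauss F1 (\<lambda>v. N v > (1/2)^n) < (1/2)^n"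
  shows "measurably_adapted N (\<lambda>n. span (S n))"
proof -
  have fd: "fin_dim_subspace (span (S n))" for n
    using fin unfolding fin_dim_subspace_def by blast
  have inc: "span (S n) \<subseteq> span (S (Suc n))" for n
    using mono by (rule span_mono)
  have fd_step: "fin_dim_subspace (span (S (Suc n)) \<inter> orthogonal_comp (span (S n)))" for n
    using fin_dim_subspace_Int_orthogonal_comp[OF fd fd inc] .
  show ?thesis
    unfolding measurably_adapted_def
  proof (intro conjI allI impI)
    fix n :: nat
    show "subspace (span (S n))" "span (S n) \<subseteq> span (S (Suc n))"
      by (simp_all add: inc)
    show "closed (span (S n))"
      using closed_fin_dim_subspace[OF fd] .
    show "fin_dim_subspace (span (S (Suc n)) \<inter> orthogonal_comp (span (S n)))"
      using fd_step .
    obtain v where "v \<in> S (Suc n)" "v \<notin> span (S n)"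
      using grow by blast
    then show "span (S (Suc n)) \<inter> orthogonal_comp (span (S n)) \<noteq> {0}"
      using Int_orthogonal_comp_neq_0[OF fd subspace_span inc] span_base by blast
    assume "n \<ge> 1"
    then show "gauss (span (S (Suc n)) \<inter> orthogonal_comp (span (S n))) (\<lambda>v. N v > (1/2)^n) < (1/2)^n"
      using small fd_step by blast
  qed (rule dense)
qed

lemma measurable_norm_finite_witnesses:
  assumes "measurable_norm N"
  obtains B where "\<And>n. finite (B n)"
    and "\<And>n F1. fin_dim_subspace F1 \<Longrightarrow> F1 \<subseteq> orthogonal_comp (span (B n)) \<Longrightarrow>
      gauss F1 (\<lambda>v. N v > (1/2)^n) < (1/2)^n"
proof -
  have "\<forall>n. \<exists>B. finite B \<and> (\<forall>F1. fin_dim_subspace F1 \<and> F1 \<subseteq> orthogonal_comp (span B) \<longrightarrow>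
          gauss F1 (\<lambda>v. N v > (1/2)^n) < (1/2)^n)"
  proof
    fix n :: nat
    have "(1/2::real)^n > 0"
      by simp
    then obtain F0 where "fin_dim_subspace F0" and F0: "\<forall>F1. fin_dim_subspace F1 \<and>
        F1 \<subseteq> orthogonal_comp F0 \<longrightarrow> gauss F1 (\<lambda>v. N v > (1/2)^n) < (1/2)^n"
      using assms unfolding measurable_norm_def by blast
    then show "\<exists>B. finite B \<and> (\<forall>F1. fin_dim_subspace F1 \<and> F1 \<subseteq> orthogonal_comp (span B) \<longrightarrow>
          gauss F1 (\<lambda>v. N v > (1/2)^n) < (1/2)^n)"
      unfolding fin_dim_subspace_def by blast
  qed
  then show ?thesis
    using that by metis
qed

lemma separable_space_dense_sequence:
  assumes "separable_space (euclidean :: 'a topology)"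
  obtains e :: "nat \<Rightarrow> 'a::topological_space" where "closure (range e) = UNIV"
proof -
  obtain D :: "'a set" where "countable D" and "closure D = UNIV"
    using assms unfolding separable_space_def by auto
  moreover have "D \<noteq> {}"
    using \<open>closure D = UNIV\<close> by auto
  ultimately show ?thesis
    using that range_from_nat_into by metis
qed

lemma exists_measurably_adapted:
  fixes N :: "'a::real_inner \<Rightarrow> real"
  assumes "separable_space (euclidean :: 'a topology)"
    and "\<not> (\<exists>B::'a set. finite B \<and> span B = UNIV)"
    and "measurable_norm N" and "finite A"
  shows "\<exists>F. measurably_adapted N F \<and> (\<forall>n. fin_dim_subspace (F n)) \<and> (\<forall>n. A \<subseteq> F n)"
proof -
  obtain B where B_fin: "\<And>n. finite (B n)"
    and B_small: "\<And>n F1. fin_dim_subspace F1 \<Longrightarrow> F1 \<subseteq> orthogonal_comp (span (B n)) \<Longrightarrow>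
      gauss F1 (\<lambda>v. N v > (1/2)^n) < (1/2)^n"
    using measurable_norm_finite_witnesses[OF assms(3)] by blast
  obtain e :: "nat \<Rightarrow> 'a" where e_dense: "closure (range e) = UNIV"
    using separable_space_dense_sequence[OF assms(1)] by blast
  define new where "new X = (SOME v. v \<notin> span X)" for X :: "'a set"
  have new: "new X \<notin> span X" if "finite X" for X
  proof -
    have "\<exists>v. v \<notin> span X"
      using assms(2) that by blast
    then show ?thesis
      unfolding new_def by (rule someI_ex)
  qed
  define S where "S = rec_nat A (\<lambda>n X. X \<union> {e n, new X} \<union> B (Suc n))"
  have S_0: "S 0 = A" and S_Suc: "S (Suc n) = S n \<union> {e n, new (S n)} \<union> B (Suc n)" for n
    unfolding S_def by simp_all
  have S_fin: "finite (S n)" for n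
    by (induction n) (simp_all add: S_0 S_Suc assms(4) B_fin)
  have A_sub: "A \<subseteq> S n" for n
    by (induction n) (auto simp: S_0 S_Suc)
  have "measurably_adapted N (\<lambda>n. span (S n))"
  proof (rule measurably_adapted_span_chain)
    show "\<not> S (Suc n) \<subseteq> span (S n)" for n
      using new[OF S_fin] unfolding S_Suc by blast
    have "e n \<in> span (S (Suc n))" for n
      unfolding S_Suc by (simp add: span_base)
    then have "range e \<subseteq> (\<Union>n\<in>{1..}. span (S n))"
      by fastforce
    then show "closure (\<Union>n\<in>{1..}. span (S n)) = UNIV"
      using e_dense closure_mono by blast
    fix n F1 assume "n \<ge> 1" "fin_dim_subspace F1" "F1 \<subseteq> orthogonal_comp (span (S n))"
    moreover obtain m where "n = Suc m"
      using \<open>n \<ge> 1\<close> not0_implies_Suc by fastforce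
    then have "orthogonal_comp (span (S n)) \<subseteq> orthogonal_comp (span (B n))"
      by (intro orthogonal_comp_anti_mono span_mono) (auto simp: S_Suc)
    ultimately show "gauss F1 (\<lambda>v. N v > (1/2)^n) < (1/2)^n"
      using B_small by blast
  qed (auto simp: S_fin S_Suc)
  moreover have "fin_dim_subspace (span (S n))" for n
    using S_fin unfolding fin_dim_subspace_def by blast
  moreover have "A \<subseteq> span (S n)" for n
    using A_sub span_superset by blast
  ultimately show ?thesis
    by blast
qed

theorem proposition3p3:
  fixes N :: "'a::{real_inner, complete_space} \<Rightarrow> real"
    and K :: "'a set" and p :: 'a
  assumes "separable_space (euclidean :: 'a topology)"
    and "\<not> (\<exists>B::'a set. finite B \<and> span B = UNIV)"
    and "measurable_norm N"
    and "closed K" and "convex K" and "p \<notin> K"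
  shows "\<exists>F :: nat \<Rightarrow> 'a set. measurably_adapted N F \<and>
           (\<forall>n\<ge>1. fin_dim_subspace (F n)) \<and> p \<in> F 1 \<and>
           (\<forall>n\<ge>1. ((\<lambda>x. p + x) ` orthogonal_comp (F n)) \<inter> K = {}) \<and>
           (\<forall>n\<ge>1. p \<notin> orth_proj (F n) ` K)"
proof -
  obtain u where u: "\<And>k. k \<in> K \<Longrightarrow> 0 < (k - p) \<bullet> u"
    using separating_direction_closed_convex[OF assms(4-6)] by blast
  obtain F where F: "measurably_adapted N F" "\<And>n. fin_dim_subspace (F n)" "\<And>n. {p, u} \<subseteq> F n"
    using exists_measurably_adapted[OF assms(1-3), of "{p, u}"] by auto
  have off_K: "k - p \<notin> orthogonal_comp (F n)" if "k \<in> K" for k n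
  proof
    assume "k - p \<in> orthogonal_comp (F n)"
    moreover have "u \<in> F n"
      using F(3) by blast
    ultimately have "u \<bullet> (k - p) = 0"
      unfolding orthogonal_comp_def orthogonal_def by blast
    then show False
      using u[OF that] by (simp add: inner_commute)
  qed
  have "(\<lambda>x. p + x) ` orthogonal_comp (F n) \<inter> K = {}" for n
    using off_K[of "p + _" n] by auto
  moreover have "p \<notin> orth_proj (F n) ` K" for n
    using off_K orth_proj_fin_dim(2)[OF F(2)] by blast
  moreover have "p \<in> F 1"
    using F(3) by blast
  ultimately show ?thesis
    using F(1,2) by (intro exI[of _ F]) simp
qed

end
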